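(* Let $\Gamma_1=(N,A,u)$ and $\Gamma_2=(M,B,v)$ be games and let $g=(\pi;(\tau_i)_{i\in N})$ be a cardinal game isomorphism from $\Gamma_1$ to $\Gamma_2$. Then for each $i\in N$ there exist $\beta_i>0$ and $\gamma_i\in\mathbb{R}$ with $\beta_i\tilde u_i(\sigma)+\gamma_i=\tilde v_{g.i}(g.\sigma)$ for all $\sigma\in\Delta(A)$, and $g$ preserves: (1) the players' best response correspondences: for all $i\in N$ and $\sigma\in\Delta(A)$, $\sigma_i\in\tilde b_i(\sigma_{-i})$ in $\Gamma_1$ if and only if $(g.\sigma)_{g.i}\in\tilde b_{g.i}((g.\sigma)_{-g.i})$ in $\Gamma_2$; (2) the game's best response correspondence: for all $\sigma,\sigma'\in\Delta(A)$, $\sigma\in\tilde b(\sigma')$ in $\Gamma_1$ if and only if $g.\sigma\in\tilde b(g.\sigma')$ in $\Gamma_2$; (3) mixed strategy Nash equilibria: $\sigma$ is a Nash equilibrium of $\Gamma_1$ if and only if $g.\sigma$ is a Nash equilibrium of $\Gamma_2$; (4) strict dominance of mixed strategies over pure strategies: for $i\in N$, $\sigma_i\in\Delta(A_i)$ and $s_i\in A_i$, $\sigma_i$ strictly dominates $s_i$ for player $i$ in $\Gamma_1$ if and only if $\sigma_i\circ\tau_i^{-1}$ strictly dominates $\tau_i(s_i)$ for player $\pi(i)$ in $\Gamma_2$.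
   Context: A (finite normal-form) game $\Gamma=(N,A,u)$ consists of a finite set $N$ of at least two players, a finite non-empty strategy set $A_i$ for each $i\in N$, $A=\times_{i\in N}A_i$, and utility functions $u_i:A\to\mathbb{R}$. $\Delta(A_i)$ is the set of probability distributions on $A_i$, $\Delta(A)=\times_{i\in N}\Delta(A_i)$, $\Delta(A_{-i})=\times_{j\neq i}\Delta(A_j)$, $\sigma(s)=\prod_i\sigma_i(s_i)$, and the expected utility is $\tilde u_i(\sigma)=\sum_{s\in A}\sigma(s)u_i(s)$ (pure strategies are identified with point-mass distributions). A game bijection $g=(\pi;(\tau_i)_{i\in N})$ from $\Gamma_1=(N,A,u)$ to $\Gamma_2=(M,B,v)$ consists of a bijection $\pi:N\to M$ and bijections $\tau_i:A_i\to B_{\pi(i)}$; write $g.i=\pi(i)$ and $g.\sigma\in\Delta(B)$ for the mixed profile whose component for player $\pi(i)$ is $\sigma_i\circ\tau_i^{-1}$. $g$ is a cardinal game isomorphism if for all $i\in N$, $\sigma,\sigma'\in\Delta(A)$: $\tilde u_i(\sigma)\le\tilde u_i(\sigma')\iff\tilde v_{g.i}(g.\sigma)\le\tilde v_{g.i}(g.\sigma')$. Player $i$'s best response correspondence is $\tilde b_i(\sigma_{-i})=\arg\max_{\sigma_i\in\Delta(A_i)}\tilde u_i(\sigma_i,\sigma_{-i})$; the game's is $\tilde b(\sigma)=\{\sigma'\in\Delta(A):\sigma_i'\in\tilde b_i(\sigma_{-i})\ \forall i\}$. $\sigma$ is a Nash equilibrium if no player $i$ has $\sigma_i'\in\Delta(A_i)$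 with $\tilde u_i(\sigma_i',\sigma_{-i})>\tilde u_i(\sigma_i,\sigma_{-i})$. $\sigma_i\in\Delta(A_i)$ strictly dominates $s_i\in A_i$ if $\tilde u_i(\sigma_i,\sigma_{-i})>\tilde u_i(s_i,\sigma_{-i})$ for all $\sigma_{-i}\in\Delta(A_{-i})$. *)

theory Defs
  imports Complex_Main "HOL-Library.FuncSet"
begin

text \<open>A game is given by a player set N, strategy sets A i, and utilities u i,
  where pure profiles are the extensional functions in PiE N A.\<close>

definition game :: "'p set \<Rightarrow> ('p \<Rightarrow> 's set) \<Rightarrow> ('p \<Rightarrow> ('p \<Rightarrow> 's) \<Rightarrow> real) \<Rightarrow> bool" where
  "game N A u \<longleftrightarrow> finite N \<and> card N \<ge> 2 \<and> (\<forall>i\<in>N. finite (A i) \<and> A i \<noteq> {})"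

definition Delta :: "'s set \<Rightarrow> ('s \<Rightarrow> real) set" where
  "Delta S = {d. (\<forall>x\<in>S. 0 \<le> d x) \<and> (\<forall>x. x \<notin> S \<longrightarrow> d x = 0) \<and> sum d S = 1}"

definition mixed :: "'p set \<Rightarrow> ('p \<Rightarrow> 's set) \<Rightarrow> ('p \<Rightarrow> 's \<Rightarrow> real) set" where
  "mixed N A = PiE N (\<lambda>i. Delta (A i))"

definition EU :: "'p set \<Rightarrow> ('p \<Rightarrow> 's set) \<Rightarrow> ('p \<Rightarrow> ('p \<Rightarrow> 's) \<Rightarrow> real) \<Rightarrow> 'p \<Rightarrow> ('p \<Rightarrow> 's \<Rightarrow> real) \<Rightarrow> real" where
  "EU N A u i \<sigma> = (\<Sum>s\<in>PiE N A. (\<Prod>j\<in>N. \<sigma> j (s j)) * u i s)"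

definition pure :: "'s \<Rightarrow> 's \<Rightarrow> real" where
  "pure s = (\<lambda>x. if x = s then 1 else 0)"

definition best_resp :: "'p set \<Rightarrow> ('p \<Rightarrow> 's set) \<Rightarrow> ('p \<Rightarrow> ('p \<Rightarrow> 's) \<Rightarrow> real) \<Rightarrow> 'p \<Rightarrow> ('p \<Rightarrow> 's \<Rightarrow> real) \<Rightarrow> ('s \<Rightarrow> real) \<Rightarrow> bool" where
  "best_resp N A u i \<sigma> d \<longleftrightarrow> d \<in> Delta (A i) \<and>
     (\<forall>d'\<in>Delta (A i). EU N A u i (\<sigma>(i := d')) \<le> EU N A u i (\<sigma>(i := d)))"

definition game_best_resp :: "'p set \<Rightarrow> ('p \<Rightarrow> 's set) \<Rightarrow> ('p \<Rightarrow> ('p \<Rightarrow> 's) \<Rightarrow> real) \<Rightarrow> ('p \<Rightarrow> 's \<Rightarrow> real) \<Rightarrow> ('p \<Rightarrow> 's \<Rightarrow> real) \<Rightarrow> bool" where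
  "game_best_resp N A u \<sigma> \<sigma>' \<longleftrightarrow> \<sigma> \<in> mixed N A \<and> (\<forall>i\<in>N. best_resp N A u i \<sigma>' (\<sigma> i))"

definition nash :: "'p set \<Rightarrow> ('p \<Rightarrow> 's set) \<Rightarrow> ('p \<Rightarrow> ('p \<Rightarrow> 's) \<Rightarrow> real) \<Rightarrow> ('p \<Rightarrow> 's \<Rightarrow> real) \<Rightarrow> bool" where
  "nash N A u \<sigma> \<longleftrightarrow> \<sigma> \<in> mixed N A \<and>
     \<not> (\<exists>i\<in>N. \<exists>d\<in>Delta (A i). EU N A u i (\<sigma>(i := d)) > EU N A u i \<sigma>)"

text \<open>d strictly dominates pure strategy s for player i (opponents' mixed profiles
  are represented by full mixed profiles whose i-th component is ignored).\<close>
definition strictly_dominates :: "'p set \<Rightarrow> ('p \<Rightarrow> 's set) \<Rightarrow> ('p \<Rightarrow> ('p \<Rightarrow> 's) \<Rightarrow> real) \<Rightarrow> 'p \<Rightarrow> ('s \<Rightarrow> real) \<Rightarrow> 's \<Rightarrow> bool" where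
  "strictly_dominates N A u i d s \<longleftrightarrow>
     (\<forall>\<sigma>\<in>mixed N A. EU N A u i (\<sigma>(i := d)) > EU N A u i (\<sigma>(i := pure s)))"

definition push_dist :: "('s \<Rightarrow> 't) \<Rightarrow> 's set \<Rightarrow> ('s \<Rightarrow> real) \<Rightarrow> 't \<Rightarrow> real" where
  "push_dist t A d = (\<lambda>b. if b \<in> t ` A then d (inv_into A t b) else 0)"

definition gmap :: "'p set \<Rightarrow> ('p \<Rightarrow> 's set) \<Rightarrow> ('p \<Rightarrow> 'q) \<Rightarrow> ('p \<Rightarrow> 's \<Rightarrow> 't)
     \<Rightarrow> ('p \<Rightarrow> 's \<Rightarrow> real) \<Rightarrow> 'q \<Rightarrow> 't \<Rightarrow> real" where
  "gmap N A \<pi> \<tau> \<sigma> = (\<lambda>j\<in>\<pi> ` N. let i = inv_into N \<pi> j in push_dist (\<tau> i) (A i) (\<sigma> i))"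

definition game_bijection :: "'p set \<Rightarrow> ('p \<Rightarrow> 's set) \<Rightarrow> 'q set \<Rightarrow> ('q \<Rightarrow> 't set)
     \<Rightarrow> ('p \<Rightarrow> 'q) \<Rightarrow> ('p \<Rightarrow> 's \<Rightarrow> 't) \<Rightarrow> bool" where
  "game_bijection N A M B \<pi> \<tau> \<longleftrightarrow> bij_betw \<pi> N M \<and> (\<forall>i\<in>N. bij_betw (\<tau> i) (A i) (B (\<pi> i)))"

definition cardinal_iso :: "'p set \<Rightarrow> ('p \<Rightarrow> 's set) \<Rightarrow> ('p \<Rightarrow> ('p \<Rightarrow> 's) \<Rightarrow> real)
     \<Rightarrow> 'q set \<Rightarrow> ('q \<Rightarrow> 't set) \<Rightarrow> ('q \<Rightarrow> ('q \<Rightarrow> 't) \<Rightarrow> real)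
     \<Rightarrow> ('p \<Rightarrow> 'q) \<Rightarrow> ('p \<Rightarrow> 's \<Rightarrow> 't) \<Rightarrow> bool" where
  "cardinal_iso N A u M B v \<pi> \<tau> \<longleftrightarrow> game_bijection N A M B \<pi> \<tau> \<and>
     (\<forall>i\<in>N. \<forall>\<sigma>\<in>mixed N A. \<forall>\<sigma>'\<in>mixed N A.
        EU N A u i \<sigma> \<le> EU N A u i \<sigma>' \<longleftrightarrow>
        EU M B v (\<pi> i) (gmap N A \<pi> \<tau> \<sigma>) \<le> EU M B v (\<pi> i) (gmap N A \<pi> \<tau> \<sigma>'))"

end

theory Submission
  imports Defs
begin

text \<open>
  For a player i, the expected utilities F = EU of player i in the first game and H = EU of
  player g.i in the second game, composed with g, are multilinear functions of the mixed profile
  that induce the same order on it. Hence H = rescale \<circ> F for an increasing function rescale on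
  the range of F. Along a single-player deviation both F and H are affine, so rescale is affine
  on the values taken along any such segment. A midpoint argument shows that every value of F
  that is not extreme lies strictly inside the values of some single-player deviation, so rescale
  is locally affine on the (connected) range of F and therefore affine, with positive slope.

  The other statements only compare player i's utilities at profiles that differ in player i's
  strategy; such comparisons are preserved by the isomorphism, and g maps the mixed profiles
  and each player's mixed strategies bijectively onto those of the second game.
\<close>

lemma locally_affine_imp_affine:
  fixes G :: "real \<Rightarrow> real" and V :: "real set"
  assumes conn: "connected V"
    and local_affine: "\<And>c. c \<in> V \<Longrightarrow> \<exists>\<epsilon>>0. \<exists>\<alpha> \<kappa>. \<forall>x\<in>V. \<bar>x - c\<bar> < \<epsilon> \<longrightarrow> G x = \<alpha> * x + \<kappa>"
  shows "\<exists>\<alpha> \<kappa>. \<forall>x\<in>V. G x = \<alpha> * x + \<kappa>"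
proof (cases "V = {}")
  case False
  then obtain c0 where c0: "c0 \<in> V" by auto
  \<comment> \<open>The chosen local representations P c are locally constant, hence constant on connected V.\<close>
  define P where "P c = (SOME p. \<exists>\<epsilon>>0. \<forall>x\<in>V. \<bar>x - c\<bar> < \<epsilon> \<longrightarrow> G x = fst p * x + snd p)" for c
  have P: "\<exists>\<epsilon>>0. \<forall>x\<in>V. \<bar>x - c\<bar> < \<epsilon> \<longrightarrow> G x = fst (P c) * x + snd (P c)" if c: "c \<in> V" for c
  proof -
    obtain \<epsilon> \<alpha> \<kappa> where "\<epsilon> > 0" "\<forall>x\<in>V. \<bar>x - c\<bar> < \<epsilon> \<longrightarrow> G x = \<alpha> * x + \<kappa>"
      using local_affine[OF c] by blast
    then have "\<exists>p. \<exists>\<epsilon>>0. \<forall>x\<in>V. \<bar>x - c\<bar> < \<epsilon> \<longrightarrow> G x = fst p * x + snd p"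
      by (intro exI[of _ "(\<alpha>, \<kappa>)"]) auto
    then show ?thesis
      unfolding P_def by (rule someI_ex)
  qed
  have "\<forall>c\<in>V. eventually (\<lambda>y. P c = P y) (at c within V)"
  proof
    fix c assume c: "c \<in> V"
    obtain \<epsilon> where \<epsilon>: "\<epsilon> > 0" "\<forall>x\<in>V. \<bar>x - c\<bar> < \<epsilon> \<longrightarrow> G x = fst (P c) * x + snd (P c)"
      using P[OF c] by blast
    have "P c = P y" if y: "y \<in> V" "y \<noteq> c" "\<bar>y - c\<bar> < \<epsilon>" for y
    proof -
      obtain \<delta> where \<delta>: "\<delta> > 0" "\<forall>x\<in>V. \<bar>x - y\<bar> < \<delta> \<longrightarrow> G x = fst (P y) * x + snd (P y)"
        using P[OF y(1)] by blast
      obtain t where t: "0 < t" "t < \<delta>" "t < \<bar>c - y\<bar>"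
        using field_lbound_gt_zero[OF \<delta>(1), of "\<bar>c - y\<bar>"] y(2) by auto
      define z where "z = y + t * sgn (c - y)"
      have "z \<in> V"
      proof (cases "y < c")
        case True
        then have "y \<le> z" "z \<le> c" using t unfolding z_def by auto
        then show ?thesis using conn y(1) c unfolding connected_iff_interval by blast
      next
        case False
        then have "c \<le> z" "z \<le> y" using t y(2) unfolding z_def by auto
        then show ?thesis using conn y(1) c unfolding connected_iff_interval by blast
      qed
      moreover have "\<bar>z - y\<bar> < \<delta>" "\<bar>z - c\<bar> < \<epsilon>" "z \<noteq> y"
        using t y(2,3) unfolding z_def by (auto simp: sgn_if abs_if split: if_splits)
      ultimately have z_eq: "fst (P c) * z + snd (P c) = fst (P y) * z + snd (P y)"
        using \<epsilon>(2) \<delta>(2) by metis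
      have y_eq: "fst (P c) * y + snd (P c) = fst (P y) * y + snd (P y)"
        using \<epsilon>(2) \<delta> y by (metis abs_zero diff_self)
      have "fst (P c) * (z - y) = fst (P y) * (z - y)"
        using y_eq z_eq by (simp add: right_diff_distrib)
      with \<open>z \<noteq> y\<close> have "fst (P c) = fst (P y)" by simp
      with y_eq show "P c = P y" by (simp add: prod_eq_iff)
    qed
    then show "eventually (\<lambda>y. P c = P y) (at c within V)"
      unfolding eventually_at using \<epsilon>(1) by (auto simp: dist_real_def)
  qed
  then have "P c = P c0" if "c \<in> V" for c
    using connected_local_const[OF conn that c0] by blast
  moreover have "G c = fst (P c) * c + snd (P c)" if "c \<in> V" for c
    using P[OF that] that by auto
  ultimately show ?thesis by metis
qed simp

definition multilinear :: "'p set \<Rightarrow> ('p \<Rightarrow> 's set) \<Rightarrow> (('p \<Rightarrow> 's \<Rightarrow> real) \<Rightarrow> real) \<Rightarrow> bool" where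
  "multilinear N A F \<longleftrightarrow> (\<forall>\<sigma>\<in>mixed N A. \<forall>j\<in>N. \<forall>d1 d2 p q.
     F (\<sigma>(j := (\<lambda>a. p * d1 a + q * d2 a))) = p * F (\<sigma>(j := d1)) + q * F (\<sigma>(j := d2)))"

lemma multilinearD:
  "multilinear N A F \<Longrightarrow> \<sigma> \<in> mixed N A \<Longrightarrow> j \<in> N \<Longrightarrow>
     F (\<sigma>(j := (\<lambda>a. p * d1 a + q * d2 a))) = p * F (\<sigma>(j := d1)) + q * F (\<sigma>(j := d2))"
  unfolding multilinear_def by blast

lemma EU_fun_upd_linear:
  assumes "finite N" "j \<in> N"
  shows "EU N A u i (\<sigma>(j := (\<lambda>a. p * d1 a + q * d2 a))) =
         p * EU N A u i (\<sigma>(j := d1)) + q * EU N A u i (\<sigma>(j := d2))"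
proof -
  define R where "R s = (\<Prod>k\<in>N - {j}. \<sigma> k (s k)) * u i s" for s
  have "(\<Prod>k\<in>N - {j}. (\<sigma>(j := d)) k (s k)) = (\<Prod>k\<in>N - {j}. \<sigma> k (s k))" for d s
    by (rule prod.cong) auto
  then have "(\<Prod>k\<in>N. (\<sigma>(j := d)) k (s k)) = d (s j) * (\<Prod>k\<in>N - {j}. \<sigma> k (s k))" for d s
    using prod.remove[OF assms, of "\<lambda>k. (\<sigma>(j := d)) k (s k)"] by simp
  then have EU_upd: "EU N A u i (\<sigma>(j := d)) = (\<Sum>s\<in>PiE N A. d (s j) * R s)" for d
    unfolding EU_def R_def by (simp add: mult.assoc)
  have "(\<Sum>s\<in>PiE N A. (p * d1 (s j) + q * d2 (s j)) * R s)
      = p * (\<Sum>s\<in>PiE N A. d1 (s j) * R s) + q * (\<Sum>s\<in>PiE N A. d2 (s j) * R s)"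
    by (simp add: distrib_right sum.distrib sum_distrib_left mult.assoc)
  then show ?thesis
    unfolding EU_upd by simp
qed

lemma multilinear_EU: "finite N \<Longrightarrow> multilinear N A (EU N A u i)"
  unfolding multilinear_def by (simp add: EU_fun_upd_linear)

lemma mixed_DeltaD: "\<sigma> \<in> mixed N A \<Longrightarrow> j \<in> N \<Longrightarrow> \<sigma> j \<in> Delta (A j)"
  unfolding mixed_def by auto

lemma mixed_fun_upd: "\<sigma> \<in> mixed N A \<Longrightarrow> j \<in> N \<Longrightarrow> d \<in> Delta (A j) \<Longrightarrow> \<sigma>(j := d) \<in> mixed N A"
  unfolding mixed_def by (auto simp: PiE_def extensional_def)

lemma Delta_convex:
  assumes "d1 \<in> Delta S" "d2 \<in> Delta S" "0 \<le> l" "l \<le> 1"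
  shows "(\<lambda>a. (1 - l) * d1 a + l * d2 a) \<in> Delta S"
proof -
  have "sum (\<lambda>a. (1 - l) * d1 a + l * d2 a) S = (1 - l) * sum d1 S + l * sum d2 S"
    by (simp add: sum.distrib sum_distrib_left)
  also have "\<dots> = 1" using assms(1,2) unfolding Delta_def by simp
  finally show ?thesis
    using assms unfolding Delta_def by simp
qed

text \<open>
  A discrete intermediate value theorem. L and U are meant to be the two sides of a threshold c,
  strict or not: {..<c} or {..c} below, {c<..} or {c..} above; the midpoint hypotheses are
  exactly what the averaging step of the proof needs.
\<close>

lemma multilinear_crossing_deviation:
  fixes F :: "('p \<Rightarrow> 's \<Rightarrow> real) \<Rightarrow> real" and L U :: "real set"
  assumes fin: "finite N" and lin: "multilinear N A F" and disj: "L \<inter> U = {}"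
    and L_mid: "\<And>x y. x \<in> L \<Longrightarrow> y \<notin> U \<Longrightarrow> (x + y) / 2 \<in> L"
    and U_mid: "\<And>x y. x \<notin> L \<Longrightarrow> y \<in> U \<Longrightarrow> (x + y) / 2 \<in> U"
    and \<sigma>: "\<sigma> \<in> mixed N A" "F \<sigma> \<in> L" and \<tau>: "\<tau> \<in> mixed N A" "F \<tau> \<in> U"
  shows "\<exists>\<rho>\<in>mixed N A. \<exists>j\<in>N. \<exists>d\<in>Delta (A j). F \<rho> \<in> L \<and> F (\<rho>(j := d)) \<in> U"
proof -
  have "\<forall>\<sigma>\<in>mixed N A. \<forall>\<tau>\<in>mixed N A. (\<forall>k\<in>N - D. \<sigma> k = \<tau> k) \<longrightarrow> F \<sigma> \<in> L \<longrightarrow> F \<tau> \<in> U \<longrightarrow>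
          (\<exists>\<rho>\<in>mixed N A. \<exists>j\<in>N. \<exists>d\<in>Delta (A j). F \<rho> \<in> L \<and> F (\<rho>(j := d)) \<in> U)"
    if "finite D" "D \<subseteq> N" for D
    using that
  proof (induction D rule: finite_subset_induct)
    case empty
    have "\<sigma> = \<tau>" if "\<sigma> \<in> mixed N A" "\<tau> \<in> mixed N A" "\<forall>k\<in>N - {}. \<sigma> k = \<tau> k" for \<sigma> \<tau>
      using that PiE_ext[of \<sigma> N "\<lambda>i. Delta (A i)" \<tau>] unfolding mixed_def by simp
    then show ?case using disj by blast
  next
    case (insert j D)
    show ?case
    proof (intro ballI impI)
      fix \<sigma> \<tau> assume \<sigma>: "\<sigma> \<in> mixed N A" "F \<sigma> \<in> L" and \<tau>: "\<tau> \<in> mixed N A" "F \<tau> \<in> U"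
        and agree: "\<forall>k\<in>N - insert j D. \<sigma> k = \<tau> k"
      have \<sigma>j: "\<sigma> j \<in> Delta (A j)" and \<tau>j: "\<tau> j \<in> Delta (A j)"
        using \<sigma>(1) \<tau>(1) insert.hyps(2) by (auto intro: mixed_DeltaD)
      define m where "m a = 1/2 * \<sigma> j a + 1/2 * \<tau> j a" for a
      have m: "m \<in> Delta (A j)"
        using Delta_convex[OF \<sigma>j \<tau>j, of "1/2"] unfolding m_def by simp
      have F_\<sigma>m: "F (\<sigma>(j := m)) = (F \<sigma> + F (\<sigma>(j := \<tau> j))) / 2"
        using multilinearD[OF lin \<sigma>(1) insert.hyps(2), of "1/2" "\<sigma> j" "1/2" "\<tau> j"]
        unfolding m_def[symmetric] by simp
      have F_\<tau>m: "F (\<tau>(j := m)) = (F (\<tau>(j := \<sigma> j)) + F \<tau>) / 2"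
        using multilinearD[OF lin \<tau>(1) insert.hyps(2), of "1/2" "\<sigma> j" "1/2" "\<tau> j"]
        unfolding m_def[symmetric] by simp
      have crossing: "\<exists>\<rho>\<in>mixed N A. \<exists>j\<in>N. \<exists>d\<in>Delta (A j). F \<rho> \<in> L \<and> F (\<rho>(j := d)) \<in> U"
        if "\<rho> \<in> mixed N A" "d \<in> Delta (A j)" "F \<rho> \<in> L" "F (\<rho>(j := d)) \<in> U" for \<rho> d
        using that insert.hyps(2) by blast
      \<comment> \<open>If neither swap of player j's strategy crosses, replacing both by their average keeps
        the two profiles on their sides and makes them agree at j.\<close>
      consider "F (\<sigma>(j := \<tau> j)) \<in> U" | "F (\<tau>(j := \<sigma> j)) \<in> L"
        | "F (\<sigma>(j := m)) \<in> L" "F (\<tau>(j := m)) \<in> U"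
        using L_mid[OF \<sigma>(2)] U_mid[OF _ \<tau>(2)] unfolding F_\<sigma>m F_\<tau>m by blast
      then show "\<exists>\<rho>\<in>mixed N A. \<exists>j\<in>N. \<exists>d\<in>Delta (A j). F \<rho> \<in> L \<and> F (\<rho>(j := d)) \<in> U"
      proof cases
        case 1
        then show ?thesis using crossing[OF \<sigma>(1) \<tau>j \<sigma>(2)] by blast
      next
        case 2
        moreover have "(\<tau>(j := \<sigma> j))(j := \<tau> j) = \<tau>" by simp
        ultimately show ?thesis
          using crossing[OF mixed_fun_upd[OF \<tau>(1) insert.hyps(2) \<sigma>j] \<tau>j] \<tau>(2) by simp
      next
        case 3
        have "\<forall>k\<in>N - D. (\<sigma>(j := m)) k = (\<tau>(j := m)) k" using agree by auto
        with 3 show ?thesis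
          using insert.IH mixed_fun_upd[OF \<sigma>(1) insert.hyps(2) m] mixed_fun_upd[OF \<tau>(1) insert.hyps(2) m]
          by blast
      qed
    qed
  qed
  from this[OF fin subset_refl] show ?thesis using \<sigma> \<tau> by blast
qed

lemma multilinear_deviation_convex:
  assumes "multilinear N A F" "\<rho> \<in> mixed N A" "j \<in> N"
  shows "F (\<rho>(j := (\<lambda>a. (1 - l) * \<rho> j a + l * d a))) = (1 - l) * F \<rho> + l * F (\<rho>(j := d))"
  using multilinearD[OF assms, of "1 - l" "\<rho> j" l d] by simp

locale ordinally_equivalent_multilinear =
  fixes N :: "'p set" and A :: "'p \<Rightarrow> 's set" and F H :: "('p \<Rightarrow> 's \<Rightarrow> real) \<Rightarrow> real"
  assumes finite_players: "finite N"
    and multilinear_F: "multilinear N A F" and multilinear_H: "multilinear N A H"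
    and same_order: "\<And>\<sigma> \<sigma>'. \<sigma> \<in> mixed N A \<Longrightarrow> \<sigma>' \<in> mixed N A \<Longrightarrow> F \<sigma> \<le> F \<sigma>' \<longleftrightarrow> H \<sigma> \<le> H \<sigma>'"
begin

definition rescale :: "real \<Rightarrow> real" where
  "rescale x = H (SOME \<sigma>. \<sigma> \<in> mixed N A \<and> F \<sigma> = x)"

lemma rescale_F: assumes \<sigma>: "\<sigma> \<in> mixed N A" shows "rescale (F \<sigma>) = H \<sigma>"
proof -
  define \<sigma>' where "\<sigma>' = (SOME \<sigma>'. \<sigma>' \<in> mixed N A \<and> F \<sigma>' = F \<sigma>)"
  have "\<sigma>' \<in> mixed N A \<and> F \<sigma>' = F \<sigma>"
    unfolding \<sigma>'_def by (rule someI[of _ \<sigma>]) (simp add: \<sigma>)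
  then have "H \<sigma>' \<le> H \<sigma>" "H \<sigma> \<le> H \<sigma>'"
    using same_order[OF _ \<sigma>, of \<sigma>'] same_order[OF \<sigma>, of \<sigma>'] by auto
  then show ?thesis
    unfolding rescale_def \<sigma>'_def[symmetric] by simp
qed

lemma rescale_affine_on_deviation:
  assumes \<rho>: "\<rho> \<in> mixed N A" and j: "j \<in> N" and d: "d \<in> Delta (A j)"
    and lt: "F \<rho> < F (\<rho>(j := d))"
  shows "\<exists>\<alpha> \<kappa>. \<forall>x\<in>{F \<rho>..F (\<rho>(j := d))}. x \<in> F ` mixed N A \<and> rescale x = \<alpha> * x + \<kappa>"
proof -
  define a b where "a = F \<rho>" and "b = F (\<rho>(j := d))"
  define \<alpha> where "\<alpha> = (H (\<rho>(j := d)) - H \<rho>) / (b - a)"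
  have "x \<in> F ` mixed N A \<and> rescale x = \<alpha> * x + (H \<rho> - \<alpha> * a)" if x: "a \<le> x" "x \<le> b" for x
  proof -
    define l where "l = (x - a) / (b - a)"
    have l: "0 \<le> l" "l \<le> 1" "l * (b - a) = x - a"
      unfolding l_def using x lt by (auto simp: a_def b_def field_simps)
    define \<sigma> where "\<sigma> = \<rho>(j := (\<lambda>t. (1 - l) * \<rho> j t + l * d t))"
    have \<sigma>: "\<sigma> \<in> mixed N A"
      unfolding \<sigma>_def using mixed_fun_upd[OF \<rho> j Delta_convex[OF mixed_DeltaD[OF \<rho> j] d l(1,2)]] .
    have "F \<sigma> = a + l * (b - a)"
      unfolding \<sigma>_def multilinear_deviation_convex[OF multilinear_F \<rho> j] a_def b_def
      by (simp add: algebra_simps)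
    then have F\<sigma>: "F \<sigma> = x" using l(3) by simp
    have "H \<sigma> = H \<rho> + l * (H (\<rho>(j := d)) - H \<rho>)"
      unfolding \<sigma>_def multilinear_deviation_convex[OF multilinear_H \<rho> j]
      by (simp add: algebra_simps)
    also have "l * (H (\<rho>(j := d)) - H \<rho>) = \<alpha> * (x - a)"
      unfolding l_def \<alpha>_def by simp
    finally show ?thesis
      using \<sigma> F\<sigma> rescale_F[OF \<sigma>] by (auto simp: algebra_simps)
  qed
  then show ?thesis unfolding a_def b_def by auto
qed

lemma connected_F_image: "connected (F ` mixed N A)"
  unfolding connected_iff_interval
proof (intro ballI allI impI)
  fix x y z assume x: "x \<in> F ` mixed N A" and y: "y \<in> F ` mixed N A" and z: "x \<le> z" "z \<le> y"
  show "z \<in> F ` mixed N A"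
  proof (cases "z = x \<or> z = y")
    case False
    with x y z obtain \<sigma> \<tau> where \<sigma>: "\<sigma> \<in> mixed N A" "F \<sigma> \<in> {..<z}" and \<tau>: "\<tau> \<in> mixed N A" "F \<tau> \<in> {z<..}"
      by (metis imageE lessThan_iff greaterThan_iff order_le_less)
    have "{..<z} \<inter> {z<..} = {}"
      and "\<And>x y. x \<in> {..<z} \<Longrightarrow> y \<notin> {z<..} \<Longrightarrow> (x + y) / 2 \<in> {..<z}"
      and "\<And>x y. x \<notin> {..<z} \<Longrightarrow> y \<in> {z<..} \<Longrightarrow> (x + y) / 2 \<in> {z<..}"
      by auto
    from multilinear_crossing_deviation[OF finite_players multilinear_F this \<sigma> \<tau>]
    obtain \<rho> j d where "\<rho> \<in> mixed N A" "j \<in> N" "d \<in> Delta (A j)" "F \<rho> < z" "z < F (\<rho>(j := d))"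
      by blast
    then show ?thesis using rescale_affine_on_deviation by fastforce
  qed (use x y in auto)
qed

lemma rescale_locally_affine:
  assumes c: "c \<in> F ` mixed N A"
  shows "\<exists>\<epsilon>>0. \<exists>\<alpha> \<kappa>. \<forall>x\<in>F ` mixed N A. \<bar>x - c\<bar> < \<epsilon> \<longrightarrow> rescale x = \<alpha> * x + \<kappa>"
proof -
  let ?V = "F ` mixed N A"
  obtain \<sigma>c where \<sigma>c: "\<sigma>c \<in> mixed N A" "F \<sigma>c = c" using c by auto
  have window: "\<exists>\<epsilon>>0. \<exists>\<alpha> \<kappa>. \<forall>x\<in>?V. \<bar>x - c\<bar> < \<epsilon> \<longrightarrow> rescale x = \<alpha> * x + \<kappa>"
    if "\<rho> \<in> mixed N A" "j \<in> N" "d \<in> Delta (A j)" "F \<rho> < F (\<rho>(j := d))" "\<epsilon> > 0"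
      "\<forall>x\<in>?V. \<bar>x - c\<bar> < \<epsilon> \<longrightarrow> F \<rho> \<le> x \<and> x \<le> F (\<rho>(j := d))" for \<rho> j d \<epsilon>
    using rescale_affine_on_deviation[OF that(1-4)] that(5,6) by (meson atLeastAtMost_iff)
  consider (interior) "\<exists>x\<in>?V. x < c" "\<exists>x\<in>?V. c < x" | (bottom) "\<forall>x\<in>?V. c \<le> x" "\<exists>x\<in>?V. c < x"
    | (top) "\<exists>x\<in>?V. x < c" "\<forall>x\<in>?V. x \<le> c" | (point) "\<forall>x\<in>?V. x = c"
    by (meson linorder_not_le order_antisym_conv)
  then show ?thesis
  proof cases
    case interior
    then obtain \<sigma> \<tau> where \<sigma>: "\<sigma> \<in> mixed N A" "F \<sigma> \<in> {..<c}" and \<tau>: "\<tau> \<in> mixed N A" "F \<tau> \<in> {c<..}"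
      by auto
    have "{..<c} \<inter> {c<..} = {}"
      and "\<And>x y. x \<in> {..<c} \<Longrightarrow> y \<notin> {c<..} \<Longrightarrow> (x + y) / 2 \<in> {..<c}"
      and "\<And>x y. x \<notin> {..<c} \<Longrightarrow> y \<in> {c<..} \<Longrightarrow> (x + y) / 2 \<in> {c<..}"
      by auto
    from multilinear_crossing_deviation[OF finite_players multilinear_F this \<sigma> \<tau>]
    obtain \<rho> j d where "\<rho> \<in> mixed N A" "j \<in> N" "d \<in> Delta (A j)" "F \<rho> < c" "c < F (\<rho>(j := d))"
      by blast
    then show ?thesis
      by (intro window[where \<epsilon> = "min (c - F \<rho>) (F (\<rho>(j := d)) - c)"]) auto
  next
    case bottom
    then obtain \<tau> where \<tau>: "\<tau> \<in> mixed N A" "F \<tau> \<in> {c<..}" by auto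
    have "{..c} \<inter> {c<..} = {}"
      and "\<And>x y. x \<in> {..c} \<Longrightarrow> y \<notin> {c<..} \<Longrightarrow> (x + y) / 2 \<in> {..c}"
      and "\<And>x y. x \<notin> {..c} \<Longrightarrow> y \<in> {c<..} \<Longrightarrow> (x + y) / 2 \<in> {c<..}"
      by auto
    from multilinear_crossing_deviation[OF finite_players multilinear_F this _ _ \<tau>] \<sigma>c
    obtain \<rho> j d where \<rho>: "\<rho> \<in> mixed N A" "j \<in> N" "d \<in> Delta (A j)" "F \<rho> \<le> c" "c < F (\<rho>(j := d))"
      by fastforce
    then have "F \<rho> = c" using bottom by force
    with \<rho> bottom show ?thesis
      by (intro window[where \<epsilon> = "F (\<rho>(j := d)) - c"]) auto
  next
    case top
    then obtain \<sigma> where \<sigma>: "\<sigma> \<in> mixed N A" "F \<sigma> \<in> {..<c}" by auto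
    have "{..<c} \<inter> {c..} = {}"
      and "\<And>x y. x \<in> {..<c} \<Longrightarrow> y \<notin> {c..} \<Longrightarrow> (x + y) / 2 \<in> {..<c}"
      and "\<And>x y. x \<notin> {..<c} \<Longrightarrow> y \<in> {c..} \<Longrightarrow> (x + y) / 2 \<in> {c..}"
      by auto
    from multilinear_crossing_deviation[OF finite_players multilinear_F this \<sigma>] \<sigma>c
    obtain \<rho> j d where \<rho>: "\<rho> \<in> mixed N A" "j \<in> N" "d \<in> Delta (A j)" "F \<rho> < c" "c \<le> F (\<rho>(j := d))"
      by fastforce
    then have "F (\<rho>(j := d)) = c" using top by (metis image_eqI mixed_fun_upd order_antisym)
    with \<rho> top show ?thesis
      by (intro window[where \<epsilon> = "c - F \<rho>"]) auto
  next
    case point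
    then show ?thesis by (intro exI[of _ 1] conjI exI[of _ 0] exI[of _ "rescale c"]) auto
  qed
qed

lemma positive_affine_relation: "\<exists>\<beta>>0. \<exists>\<gamma>. \<forall>\<sigma>\<in>mixed N A. \<beta> * F \<sigma> + \<gamma> = H \<sigma>"
proof -
  obtain \<alpha> \<kappa> where "\<forall>x\<in>F ` mixed N A. rescale x = \<alpha> * x + \<kappa>"
    using locally_affine_imp_affine[OF connected_F_image rescale_locally_affine] by blast
  then have H: "H \<sigma> = \<alpha> * F \<sigma> + \<kappa>" if "\<sigma> \<in> mixed N A" for \<sigma>
    using rescale_F[OF that] that by auto
  show ?thesis
  proof (cases "\<exists>\<sigma>0\<in>mixed N A. \<exists>\<sigma>1\<in>mixed N A. F \<sigma>0 < F \<sigma>1")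
    case True
    then obtain \<sigma>0 \<sigma>1 where \<sigma>: "\<sigma>0 \<in> mixed N A" "\<sigma>1 \<in> mixed N A" "F \<sigma>0 < F \<sigma>1" by blast
    then have "H \<sigma>0 < H \<sigma>1" using same_order[OF \<sigma>(2,1)] by auto
    then have "\<alpha> > 0" using H \<sigma> by (smt (verit) mult_le_cancel_left)
    then show ?thesis using H by auto
  next
    case False
    then have "H \<sigma> = 1 * F \<sigma> + (H \<sigma>0 - F \<sigma>0)" if "\<sigma> \<in> mixed N A" "\<sigma>0 \<in> mixed N A" for \<sigma> \<sigma>0
      using H that by (metis add.commute diff_add_cancel linorder_neqE_linordered_idom mult_1)
    then show ?thesis by (metis zero_less_one)
  qed
qed

end

lemma push_dist_Delta:
  assumes t: "bij_betw t X Y" and d: "d \<in> Delta X"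
  shows "push_dist t X d \<in> Delta Y"
proof -
  have "sum (push_dist t X d) Y = sum (\<lambda>b. d (inv_into X t b)) Y"
    using t unfolding push_dist_def bij_betw_def by simp
  also have "\<dots> = sum d X" using sum.reindex_bij_betw[OF bij_betw_inv_into[OF t]] .
  finally show ?thesis
    using d t bij_betw_inv_into[OF t] unfolding push_dist_def Delta_def bij_betw_def by auto
qed

lemma push_dist_image_Delta:
  assumes t: "bij_betw t X Y"
  shows "push_dist t X ` Delta X = Delta Y"
proof (intro equalityI subsetI)
  fix e assume e: "e \<in> Delta Y"
  define d where "d a = (if a \<in> X then e (t a) else 0)" for a
  have "sum d X = sum e Y"
    unfolding d_def using sum.reindex_bij_betw[OF t] by simp
  then have "d \<in> Delta X"
    using e t unfolding d_def Delta_def bij_betw_def by auto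
  moreover have "push_dist t X d = e"
  proof
    fix b show "push_dist t X d b = e b"
      using e t unfolding push_dist_def d_def Delta_def bij_betw_def
      by (auto simp: f_inv_into_f inv_into_into)
  qed
  ultimately show "e \<in> push_dist t X ` Delta X" by blast
qed (use push_dist_Delta[OF t] in blast)

lemma push_dist_linear:
  "push_dist t X (\<lambda>a. p * d1 a + q * d2 a) = (\<lambda>b. p * push_dist t X d1 b + q * push_dist t X d2 b)"
  unfolding push_dist_def by auto

lemma pure_Delta: "finite X \<Longrightarrow> s \<in> X \<Longrightarrow> pure s \<in> Delta X"
  unfolding Delta_def pure_def by auto

lemma push_dist_pure: "inj_on t X \<Longrightarrow> s \<in> X \<Longrightarrow> push_dist t X (pure s) = pure (t s)"
  unfolding push_dist_def pure_def by (intro ext) (auto simp: inv_into_f_f)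

context
  fixes N :: "'p set" and A :: "'p \<Rightarrow> 's set" and M :: "'q set" and B :: "'q \<Rightarrow> 't set"
    and \<pi> :: "'p \<Rightarrow> 'q" and \<tau> :: "'p \<Rightarrow> 's \<Rightarrow> 't"
  assumes bij: "game_bijection N A M B \<pi> \<tau>"
begin

lemma bij_betw_players: "bij_betw \<pi> N M"
  using bij unfolding game_bijection_def by blast

lemma bij_betw_strategies: "i \<in> N \<Longrightarrow> bij_betw (\<tau> i) (A i) (B (\<pi> i))"
  using bij unfolding game_bijection_def by blast

lemma gmap_apply: "i \<in> N \<Longrightarrow> gmap N A \<pi> \<tau> \<sigma> (\<pi> i) = push_dist (\<tau> i) (A i) (\<sigma> i)"
  using bij_betw_imp_inj_on[OF bij_betw_players] unfolding gmap_def by (simp add: inv_into_f_f)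

lemma gmap_fun_upd:
  assumes i: "i \<in> N"
  shows "gmap N A \<pi> \<tau> (\<sigma>(i := d)) = (gmap N A \<pi> \<tau> \<sigma>)(\<pi> i := push_dist (\<tau> i) (A i) d)"
proof
  fix k
  show "gmap N A \<pi> \<tau> (\<sigma>(i := d)) k = ((gmap N A \<pi> \<tau> \<sigma>)(\<pi> i := push_dist (\<tau> i) (A i) d)) k"
  proof (cases "k \<in> \<pi> ` N")
    case True
    then obtain j where "j \<in> N" "k = \<pi> j" by blast
    then show ?thesis
      using i bij_betw_players gmap_apply[of j] gmap_apply[of i]
      by (cases "j = i") (auto simp: bij_betw_def inj_on_eq_iff)
  next
    case False
    then show ?thesis using i unfolding gmap_def by auto
  qed
qed

lemma gmap_mixed:
  assumes \<sigma>: "\<sigma> \<in> mixed N A"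
  shows "gmap N A \<pi> \<tau> \<sigma> \<in> mixed M B"
proof -
  have "gmap N A \<pi> \<tau> \<sigma> (\<pi> i) \<in> Delta (B (\<pi> i))" if "i \<in> N" for i
    unfolding gmap_apply[OF that]
    using push_dist_Delta[OF bij_betw_strategies[OF that] mixed_DeltaD[OF \<sigma> that]] .
  moreover have "gmap N A \<pi> \<tau> \<sigma> \<in> extensional M"
    unfolding gmap_def using bij_betw_players by (simp add: bij_betw_def)
  ultimately show ?thesis
    using bij_betw_players unfolding mixed_def bij_betw_def by (auto simp: PiE_iff)
qed

lemma gmap_image_mixed: "gmap N A \<pi> \<tau> ` mixed N A = mixed M B"
proof (intro equalityI subsetI)
  fix \<xi> assume \<xi>: "\<xi> \<in> mixed M B"
  have "\<exists>d\<in>Delta (A i). push_dist (\<tau> i) (A i) d = \<xi> (\<pi> i)" if "i \<in> N" for i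
    using push_dist_image_Delta[OF bij_betw_strategies[OF that]] mixed_DeltaD[OF \<xi>] bij_betw_players that
    by (metis bij_betwE imageE)
  then obtain \<sigma> where \<sigma>: "\<And>i. i \<in> N \<Longrightarrow> \<sigma> i \<in> Delta (A i) \<and> push_dist (\<tau> i) (A i) (\<sigma> i) = \<xi> (\<pi> i)"
    by metis
  have \<sigma>_mixed: "restrict \<sigma> N \<in> mixed N A" unfolding mixed_def using \<sigma> by auto
  have "gmap N A \<pi> \<tau> (restrict \<sigma> N) = \<xi>"
  proof (rule PiE_ext[OF gmap_mixed[OF \<sigma>_mixed, unfolded mixed_def] \<xi>[unfolded mixed_def]])
    fix k assume "k \<in> M"
    then obtain i where "i \<in> N" "k = \<pi> i" using bij_betw_players by (auto simp: bij_betw_def)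
    then show "gmap N A \<pi> \<tau> (restrict \<sigma> N) k = \<xi> k" using gmap_apply \<sigma> by simp
  qed
  with \<sigma>_mixed show "\<xi> \<in> gmap N A \<pi> \<tau> ` mixed N A" by blast
qed (use gmap_mixed in blast)

lemma multilinear_EU_gmap:
  assumes "finite M"
  shows "multilinear N A (\<lambda>\<sigma>. EU M B v k (gmap N A \<pi> \<tau> \<sigma>))"
  unfolding multilinear_def
proof (intro ballI allI)
  fix \<sigma> j d1 d2 p q assume "\<sigma> \<in> mixed N A" "j \<in> N"
  then have "\<pi> j \<in> M" using bij_betw_players by (auto simp: bij_betw_def)
  then show "EU M B v k (gmap N A \<pi> \<tau> (\<sigma>(j := \<lambda>a. p * d1 a + q * d2 a))) =
    p * EU M B v k (gmap N A \<pi> \<tau> (\<sigma>(j := d1))) + q * EU M B v k (gmap N A \<pi> \<tau> (\<sigma>(j := d2)))"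
    unfolding gmap_fun_upd[OF \<open>j \<in> N\<close>] push_dist_linear by (rule EU_fun_upd_linear[OF assms])
qed

end

lemma nash_iff_game_best_resp: "nash N A u \<sigma> \<longleftrightarrow> game_best_resp N A u \<sigma> \<sigma>"
proof (cases "\<sigma> \<in> mixed N A")
  case True
  then have "\<sigma>(i := \<sigma> i) = \<sigma>" "\<sigma> i \<in> Delta (A i)" if "i \<in> N" for i
    using mixed_DeltaD that by auto
  then show ?thesis
    unfolding nash_def game_best_resp_def best_resp_def by (metis not_le)
qed (simp add: nash_def game_best_resp_def)

context
  fixes N :: "'p set" and A :: "'p \<Rightarrow> 's set" and u :: "'p \<Rightarrow> ('p \<Rightarrow> 's) \<Rightarrow> real"
    and M :: "'q set" and B :: "'q \<Rightarrow> 't set" and v :: "'q \<Rightarrow> ('q \<Rightarrow> 't) \<Rightarrow> real"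
    and \<pi> :: "'p \<Rightarrow> 'q" and \<tau> :: "'p \<Rightarrow> 's \<Rightarrow> 't"
  assumes iso: "cardinal_iso N A u M B v \<pi> \<tau>"
begin

lemma cardinal_iso_game_bijection: "game_bijection N A M B \<pi> \<tau>"
  using iso unfolding cardinal_iso_def by blast

lemma cardinal_iso_same_order:
  "i \<in> N \<Longrightarrow> \<sigma> \<in> mixed N A \<Longrightarrow> \<sigma>' \<in> mixed N A \<Longrightarrow>
     EU N A u i \<sigma> \<le> EU N A u i \<sigma>' \<longleftrightarrow>
     EU M B v (\<pi> i) (gmap N A \<pi> \<tau> \<sigma>) \<le> EU M B v (\<pi> i) (gmap N A \<pi> \<tau> \<sigma>')"
  using iso unfolding cardinal_iso_def by blast

lemma EU_positive_affine_transform: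
  assumes "finite N" "finite M" "i \<in> N"
  shows "\<exists>\<beta>>0. \<exists>\<gamma>. \<forall>\<sigma>\<in>mixed N A. \<beta> * EU N A u i \<sigma> + \<gamma> = EU M B v (\<pi> i) (gmap N A \<pi> \<tau> \<sigma>)"
proof -
  interpret ordinally_equivalent_multilinear N A "EU N A u i" "\<lambda>\<sigma>. EU M B v (\<pi> i) (gmap N A \<pi> \<tau> \<sigma>)"
    using assms multilinear_EU multilinear_EU_gmap[OF cardinal_iso_game_bijection] cardinal_iso_same_order
    by unfold_locales auto
  show ?thesis by (rule positive_affine_relation)
qed

lemma EU_deviation_le_iff:
  assumes i: "i \<in> N" and \<sigma>: "\<sigma> \<in> mixed N A" and d: "d \<in> Delta (A i)" "d' \<in> Delta (A i)"
  shows "EU N A u i (\<sigma>(i := d)) \<le> EU N A u i (\<sigma>(i := d')) \<longleftrightarrow>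
    EU M B v (\<pi> i) ((gmap N A \<pi> \<tau> \<sigma>)(\<pi> i := push_dist (\<tau> i) (A i) d)) \<le>
    EU M B v (\<pi> i) ((gmap N A \<pi> \<tau> \<sigma>)(\<pi> i := push_dist (\<tau> i) (A i) d'))"
  using cardinal_iso_same_order[OF i mixed_fun_upd[OF \<sigma> i d(1)] mixed_fun_upd[OF \<sigma> i d(2)]]
  unfolding gmap_fun_upd[OF cardinal_iso_game_bijection i] .

lemma best_resp_gmap_iff:
  assumes i: "i \<in> N" and \<sigma>: "\<sigma> \<in> mixed N A" and d: "d \<in> Delta (A i)"
  shows "best_resp N A u i \<sigma> d \<longleftrightarrow>
    best_resp M B v (\<pi> i) (gmap N A \<pi> \<tau> \<sigma>) (push_dist (\<tau> i) (A i) d)"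
proof -
  let ?push = "push_dist (\<tau> i) (A i)" and ?g\<sigma> = "gmap N A \<pi> \<tau> \<sigma>"
  have "best_resp N A u i \<sigma> d \<longleftrightarrow> (\<forall>d'\<in>Delta (A i). EU N A u i (\<sigma>(i := d')) \<le> EU N A u i (\<sigma>(i := d)))"
    using d unfolding best_resp_def by blast
  also have "\<dots> \<longleftrightarrow> (\<forall>d'\<in>Delta (A i). EU M B v (\<pi> i) (?g\<sigma>(\<pi> i := ?push d')) \<le> EU M B v (\<pi> i) (?g\<sigma>(\<pi> i := ?push d)))"
    using EU_deviation_le_iff[OF i \<sigma> _ d] by blast
  also have "\<dots> \<longleftrightarrow> (\<forall>e\<in>Delta (B (\<pi> i)). EU M B v (\<pi> i) (?g\<sigma>(\<pi> i := e)) \<le> EU M B v (\<pi> i) (?g\<sigma>(\<pi> i := ?push d)))"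
    unfolding push_dist_image_Delta[OF bij_betw_strategies[OF cardinal_iso_game_bijection i], symmetric] by blast
  also have "\<dots> \<longleftrightarrow> best_resp M B v (\<pi> i) ?g\<sigma> (?push d)"
    using push_dist_Delta[OF bij_betw_strategies[OF cardinal_iso_game_bijection i] d] unfolding best_resp_def by blast
  finally show ?thesis .
qed

lemma game_best_resp_gmap_iff:
  assumes \<sigma>: "\<sigma> \<in> mixed N A" and \<sigma>': "\<sigma>' \<in> mixed N A"
  shows "game_best_resp N A u \<sigma> \<sigma>' \<longleftrightarrow> game_best_resp M B v (gmap N A \<pi> \<tau> \<sigma>) (gmap N A \<pi> \<tau> \<sigma>')"
proof -
  have "game_best_resp N A u \<sigma> \<sigma>' \<longleftrightarrow> (\<forall>i\<in>N. best_resp N A u i \<sigma>' (\<sigma> i))"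
    using \<sigma> unfolding game_best_resp_def by blast
  also have "\<dots> \<longleftrightarrow> (\<forall>i\<in>N. best_resp M B v (\<pi> i) (gmap N A \<pi> \<tau> \<sigma>') (gmap N A \<pi> \<tau> \<sigma> (\<pi> i)))"
    using best_resp_gmap_iff[OF _ \<sigma>' mixed_DeltaD[OF \<sigma>]] gmap_apply[OF cardinal_iso_game_bijection] by simp
  also have "\<dots> \<longleftrightarrow> (\<forall>k\<in>M. best_resp M B v k (gmap N A \<pi> \<tau> \<sigma>') (gmap N A \<pi> \<tau> \<sigma> k))"
    using bij_betw_players[OF cardinal_iso_game_bijection] by (auto simp: bij_betw_def)
  also have "\<dots> \<longleftrightarrow> game_best_resp M B v (gmap N A \<pi> \<tau> \<sigma>) (gmap N A \<pi> \<tau> \<sigma>')"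
    using gmap_mixed[OF cardinal_iso_game_bijection \<sigma>] unfolding game_best_resp_def by blast
  finally show ?thesis .
qed

lemma nash_gmap_iff: "\<sigma> \<in> mixed N A \<Longrightarrow> nash N A u \<sigma> \<longleftrightarrow> nash M B v (gmap N A \<pi> \<tau> \<sigma>)"
  unfolding nash_iff_game_best_resp by (rule game_best_resp_gmap_iff)

lemma strictly_dominates_gmap_iff:
  assumes i: "i \<in> N" and fin: "finite (A i)" and d: "d \<in> Delta (A i)" and s: "s \<in> A i"
  shows "strictly_dominates N A u i d s \<longleftrightarrow>
    strictly_dominates M B v (\<pi> i) (push_dist (\<tau> i) (A i) d) (\<tau> i s)"
proof -
  let ?push = "push_dist (\<tau> i) (A i)"
  have bij_i: "bij_betw (\<tau> i) (A i) (B (\<pi> i))" by (rule bij_betw_strategies[OF cardinal_iso_game_bijection i])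
  have push_s: "?push (pure s) = pure (\<tau> i s)"
    using push_dist_pure[OF bij_betw_imp_inj_on[OF bij_i] s] .
  have "strictly_dominates N A u i d s \<longleftrightarrow>
    (\<forall>\<sigma>\<in>mixed N A. \<not> EU N A u i (\<sigma>(i := d)) \<le> EU N A u i (\<sigma>(i := pure s)))"
    unfolding strictly_dominates_def by (simp add: not_le)
  also have "\<dots> \<longleftrightarrow> (\<forall>\<sigma>\<in>mixed N A.
      \<not> EU M B v (\<pi> i) ((gmap N A \<pi> \<tau> \<sigma>)(\<pi> i := ?push d)) \<le> EU M B v (\<pi> i) ((gmap N A \<pi> \<tau> \<sigma>)(\<pi> i := pure (\<tau> i s))))"
    using EU_deviation_le_iff[OF i _ d pure_Delta[OF fin s]] unfolding push_s by blast
  also have "\<dots> \<longleftrightarrow> (\<forall>\<xi>\<in>mixed M B. \<not> EU M B v (\<pi> i) (\<xi>(\<pi> i := ?push d)) \<le> EU M B v (\<pi> i) (\<xi>(\<pi> i := pure (\<tau> i s))))"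
    unfolding gmap_image_mixed[OF cardinal_iso_game_bijection, symmetric] by blast
  also have "\<dots> \<longleftrightarrow> strictly_dominates M B v (\<pi> i) (?push d) (\<tau> i s)"
    unfolding strictly_dominates_def by (simp add: not_le)
  finally show ?thesis .
qed

end

theorem mainTheorem7:
  fixes N :: "'p set" and A :: "'p \<Rightarrow> 's set" and u :: "'p \<Rightarrow> ('p \<Rightarrow> 's) \<Rightarrow> real"
    and M :: "'q set" and B :: "'q \<Rightarrow> 't set" and v :: "'q \<Rightarrow> ('q \<Rightarrow> 't) \<Rightarrow> real"
    and \<pi> :: "'p \<Rightarrow> 'q" and \<tau> :: "'p \<Rightarrow> 's \<Rightarrow> 't"
  assumes G1: "game N A u" and G2: "game M B v"
    and iso: "cardinal_iso N A u M B v \<pi> \<tau>"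
  shows "(\<forall>i\<in>N. \<exists>\<beta>>0. \<exists>\<gamma>. \<forall>\<sigma>\<in>mixed N A.
            \<beta> * EU N A u i \<sigma> + \<gamma> = EU M B v (\<pi> i) (gmap N A \<pi> \<tau> \<sigma>))
    \<and> (\<forall>i\<in>N. \<forall>\<sigma>\<in>mixed N A.
         best_resp N A u i \<sigma> (\<sigma> i) \<longleftrightarrow>
         best_resp M B v (\<pi> i) (gmap N A \<pi> \<tau> \<sigma>) (gmap N A \<pi> \<tau> \<sigma> (\<pi> i)))
    \<and> (\<forall>\<sigma>\<in>mixed N A. \<forall>\<sigma>'\<in>mixed N A.
         game_best_resp N A u \<sigma> \<sigma>' \<longleftrightarrow>
         game_best_resp M B v (gmap N A \<pi> \<tau> \<sigma>) (gmap N A \<pi> \<tau> \<sigma>'))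
    \<and> (\<forall>\<sigma>\<in>mixed N A. nash N A u \<sigma> \<longleftrightarrow> nash M B v (gmap N A \<pi> \<tau> \<sigma>))
    \<and> (\<forall>i\<in>N. \<forall>d\<in>Delta (A i). \<forall>s\<in>A i.
         strictly_dominates N A u i d s \<longleftrightarrow>
         strictly_dominates M B v (\<pi> i) (push_dist (\<tau> i) (A i) d) (\<tau> i s))"
proof (intro conjI ballI)
  have fin: "finite N" "finite M" "\<And>i. i \<in> N \<Longrightarrow> finite (A i)"
    using G1 G2 unfolding game_def by auto
  show "\<exists>\<beta>>0. \<exists>\<gamma>. \<forall>\<sigma>\<in>mixed N A. \<beta> * EU N A u i \<sigma> + \<gamma> = EU M B v (\<pi> i) (gmap N A \<pi> \<tau> \<sigma>)"
    if "i \<in> N" for i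
    using EU_positive_affine_transform[OF iso fin(1,2) that] .
  show "best_resp N A u i \<sigma> (\<sigma> i) \<longleftrightarrow> best_resp M B v (\<pi> i) (gmap N A \<pi> \<tau> \<sigma>) (gmap N A \<pi> \<tau> \<sigma> (\<pi> i))"
    if "i \<in> N" "\<sigma> \<in> mixed N A" for i \<sigma>
    using best_resp_gmap_iff[OF iso that mixed_DeltaD[OF that(2,1)]]
    unfolding gmap_apply[OF cardinal_iso_game_bijection[OF iso] that(1)] .
  show "game_best_resp N A u \<sigma> \<sigma>' \<longleftrightarrow> game_best_resp M B v (gmap N A \<pi> \<tau> \<sigma>) (gmap N A \<pi> \<tau> \<sigma>')"
    if "\<sigma> \<in> mixed N A" "\<sigma>' \<in> mixed N A" for \<sigma> \<sigma>'
    using game_best_resp_gmap_iff[OF iso that] .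
  show "nash N A u \<sigma> \<longleftrightarrow> nash M B v (gmap N A \<pi> \<tau> \<sigma>)" if "\<sigma> \<in> mixed N A" for \<sigma>
    using nash_gmap_iff[OF iso that] .
  show "strictly_dominates N A u i d s \<longleftrightarrow> strictly_dominates M B v (\<pi> i) (push_dist (\<tau> i) (A i) d) (\<tau> i s)"
    if "i \<in> N" "d \<in> Delta (A i)" "s \<in> A i" for i d s
    using strictly_dominates_gmap_iff[OF iso that(1) fin(3)[OF that(1)] that(2,3)] .
qed

end
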